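(* Let $\rho$ be a Drinfeld $\mathbb{F}_q[t]$-module of rank $r$ defined over a field $K\subseteq\overline{k}$, let $\omega_1,\dots,\omega_r$ be an $A$-basis of $\Lambda_\rho$, and let $\mathbf{f}=[f_1,\dots,f_r]^{\mathrm{tr}}$ with $f_i=\sum_{m\ge0}\exp_\rho(\omega_i/\theta^{m+1})t^m\in K^{\mathrm{sep}}[[t]]$. Then for every $\epsilon\in\mathrm{Gal}(K^{\mathrm{sep}}/K)$, $\epsilon(\mathbf{f})=g_\epsilon\mathbf{f}$, where $\epsilon$ acts on $K^{\mathrm{sep}}[[t]]$ coefficientwise and entrywise.
   Context: $\mathbb{F}_q$ is the field with $q$ elements, $\theta,t$ independent variables, $A=\mathbb{F}_q[\theta]$, $k=\mathbb{F}_q(\theta)$, $\mathbb{C}_\infty$ the completion of an algebraic closure of $\mathbb{F}_q((1/\theta))$, $\overline{k}$ the algebraic closure of $k$ in $\mathbb{C}_\infty$, $K^{\mathrm{sep}}$ the separable closure of $K$ in $\overline{k}$. $\tau$ is the $q$-power Frobenius; a Drinfeld $\mathbb{F}_q[t]$-module of rank $r$ over $K$ is the $\mathbb{F}_q$-algebra map $\rho:\mathbb{F}_q[t]\to K[\tau]$ determined by $\rho_t=\theta+\kappa_1\tau+\dots+\kappa_r\tau^r$ ($\kappa_r\ne0$), acting on $\mathbb{C}_\infty$ by $(\sum c_i\tau^i)(x)=\sum c_ix^{q^i}$ and making $\mathbb{C}_\infty$ an $\mathbb{F}_q[t]$-module. $\exp_\rho$ is the unique entire $\mathbb{F}_q$-linear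 series $z+\sum_{i\ge1}\alpha_iz^{q^i}$ with $\exp_\rho(\theta z)=\rho_t(\exp_\rho(z))$, and $\Lambda_\rho=\ker\exp_\rho$ (free of rank $r$ over $A$). Put $\xi_{i,m}=\exp_\rho(\omega_i/\theta^{m+1})$, $x_i=(\xi_{i,0},\xi_{i,1},\dots)$; these form an $\mathbb{F}_q[[t]]$-basis of the Tate module $T_t(\rho)=\varprojlim\rho[t^m]$. $\mathrm{Gal}(K^{\mathrm{sep}}/K)$ acts on $T_t(\rho)$ by a representation $\varphi_t$, and $g_\epsilon\in\mathrm{GL}_r(\mathbb{F}_q[[t]])$ is defined by $\varphi_t(\epsilon)\mathbf{x}=g_\epsilon\mathbf{x}$, $\mathbf{x}=[x_1,\dots,x_r]^{\mathrm{tr}}$. *)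

theory Defs
  imports "HOL-Computational_Algebra.Polynomial" "HOL-Computational_Algebra.Formal_Power_Series"
begin

text \<open>The finite field F_q is a finite field type 'f (q = CARD('f)).
  The field C_infinity is modelled by a field type 'c together with an embedding
  iota of F_q, the element theta and an absolute value v, subject to axioms which
  characterise C_infinity (up to isometric isomorphism, and rescaling of v):
  v is a non-archimedean absolute value, 'c is complete and algebraically closed,
  |theta| > 1, nonzero constants have absolute value 1, and the algebraic closure of
  k = F_q(theta) in 'c is dense.\<close>

definition is_abs_val :: "('c::field \<Rightarrow> real) \<Rightarrow> bool" where
  "is_abs_val v \<longleftrightarrow> (\<forall>x. v x \<ge> 0) \<and> (\<forall>x. v x = 0 \<longleftrightarrow> x = 0)
     \<and> (\<forall>x y. v (x * y) = v x * v y) \<and> (\<forall>x y. v (x + y) \<le> max (v x) (v y))"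

definition v_conv :: "('c::field \<Rightarrow> real) \<Rightarrow> (nat \<Rightarrow> 'c) \<Rightarrow> 'c \<Rightarrow> bool" where
  "v_conv v s L \<longleftrightarrow> (\<lambda>n. v (s n - L)) \<longlonglongrightarrow> 0"

definition v_cauchy :: "('c::field \<Rightarrow> real) \<Rightarrow> (nat \<Rightarrow> 'c) \<Rightarrow> bool" where
  "v_cauchy v s \<longleftrightarrow> (\<forall>e>0. \<exists>N. \<forall>m\<ge>N. \<forall>n\<ge>N. v (s m - s n) < e)"

definition is_ring_hom_emb :: "('f::field \<Rightarrow> 'c::field) \<Rightarrow> bool" where
  "is_ring_hom_emb \<iota> \<longleftrightarrow> (\<forall>a b. \<iota> (a + b) = \<iota> a + \<iota> b) \<and> (\<forall>a b. \<iota> (a * b) = \<iota> a * \<iota> b)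
     \<and> \<iota> 1 = 1"

definition k_field :: "('f::field \<Rightarrow> 'c::field) \<Rightarrow> 'c \<Rightarrow> 'c set" where
  "k_field \<iota> \<theta> = {poly (map_poly \<iota> a) \<theta> / poly (map_poly \<iota> b) \<theta> | a b. b \<noteq> 0}"

definition algebraic_over :: "'c::field set \<Rightarrow> 'c \<Rightarrow> bool" where
  "algebraic_over S x \<longleftrightarrow> (\<exists>p. p \<noteq> 0 \<and> (\<forall>i. coeff p i \<in> S) \<and> poly p x = 0)"

definition separable_over :: "'c::field set \<Rightarrow> 'c \<Rightarrow> bool" where
  "separable_over S x \<longleftrightarrow> (\<exists>p. p \<noteq> 0 \<and> (\<forall>i. coeff p i \<in> S) \<and> poly p x = 0
       \<and> coprime p (pderiv p))"

definition kbar :: "('f::field \<Rightarrow> 'c::field) \<Rightarrow> 'c \<Rightarrow> 'c set" where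
  "kbar \<iota> \<theta> = {x. algebraic_over (k_field \<iota> \<theta>) x}"

definition Cinf_axioms :: "('f::{finite,field} \<Rightarrow> 'c::field) \<Rightarrow> 'c \<Rightarrow> ('c \<Rightarrow> real) \<Rightarrow> bool" where
  "Cinf_axioms \<iota> \<theta> v \<longleftrightarrow> is_ring_hom_emb \<iota> \<and> is_abs_val v
     \<and> (\<forall>s. v_cauchy v s \<longrightarrow> (\<exists>L. v_conv v s L))
     \<and> (\<forall>p::'c poly. degree p > 0 \<longrightarrow> (\<exists>x. poly p x = 0))
     \<and> v \<theta> > 1 \<and> (\<forall>a. a \<noteq> 0 \<longrightarrow> v (\<iota> a) = 1)
     \<and> (\<forall>x e. e > 0 \<longrightarrow> (\<exists>y \<in> kbar \<iota> \<theta>. v (x - y) < e))"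

definition is_subfield :: "'c::field set \<Rightarrow> bool" where
  "is_subfield K \<longleftrightarrow> 0 \<in> K \<and> 1 \<in> K \<and> (\<forall>x\<in>K. \<forall>y\<in>K. x + y \<in> K \<and> x * y \<in> K)
     \<and> (\<forall>x\<in>K. - x \<in> K \<and> inverse x \<in> K)"

definition Ksep :: "('f::field \<Rightarrow> 'c::field) \<Rightarrow> 'c \<Rightarrow> 'c set \<Rightarrow> 'c set" where
  "Ksep \<iota> \<theta> K = {x \<in> kbar \<iota> \<theta>. separable_over K x}"

text \<open>epsilon is an element of Gal(K^sep/K) (its values outside K^sep are irrelevant).\<close>
definition is_Gal :: "'c::field set \<Rightarrow> 'c set \<Rightarrow> ('c \<Rightarrow> 'c) \<Rightarrow> bool" where
  "is_Gal L K \<epsilon> \<longleftrightarrow> bij_betw \<epsilon> L L \<and> (\<forall>x\<in>L. \<forall>y\<in>L. \<epsilon> (x + y) = \<epsilon> x + \<epsilon> y \<and> \<epsilon> (x * y) = \<epsilon> x * \<epsilon> y)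
     \<and> (\<forall>x\<in>K. \<epsilon> x = x)"

text \<open>Drinfeld module: rho_t = theta + kappa_1 tau + ... + kappa_r tau^r acting on 'c.\<close>
definition rho_t :: "'c::field \<Rightarrow> (nat \<Rightarrow> 'c) \<Rightarrow> nat \<Rightarrow> nat \<Rightarrow> 'c \<Rightarrow> 'c" where
  "rho_t \<theta> \<kappa> q r x = \<theta> * x + (\<Sum>i=1..r. \<kappa> i * x ^ (q ^ i))"

text \<open>Action of a polynomial a = sum c_k t^k (given by its coefficients c_0..c_m) via rho.\<close>
definition rho_act :: "('f \<Rightarrow> 'c::field) \<Rightarrow> 'c \<Rightarrow> (nat \<Rightarrow> 'c) \<Rightarrow> nat \<Rightarrow> nat \<Rightarrow> (nat \<Rightarrow> 'f) \<Rightarrow> nat \<Rightarrow> 'c \<Rightarrow> 'c" where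
  "rho_act \<iota> \<theta> \<kappa> q r c m x = (\<Sum>k\<le>m. \<iota> (c k) * ((rho_t \<theta> \<kappa> q r) ^^ k) x)"

definition is_exp :: "('c::field \<Rightarrow> real) \<Rightarrow> 'c \<Rightarrow> (nat \<Rightarrow> 'c) \<Rightarrow> nat \<Rightarrow> nat \<Rightarrow> ('c \<Rightarrow> 'c) \<Rightarrow> bool" where
  "is_exp v \<theta> \<kappa> q r E \<longleftrightarrow> (\<exists>\<alpha>. \<alpha> 0 = 1 \<and>
      (\<forall>z. v_conv v (\<lambda>n. \<Sum>i<n. \<alpha> i * z ^ (q ^ i)) (E z)))
    \<and> (\<forall>z. E (\<theta> * z) = rho_t \<theta> \<kappa> q r (E z))"

text \<open>omega_0..omega_(r-1) is an A-basis of Lambda = ker E, A = F_q[theta].\<close>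
definition is_A_basis :: "('f::field \<Rightarrow> 'c::field) \<Rightarrow> 'c \<Rightarrow> ('c \<Rightarrow> 'c) \<Rightarrow> nat \<Rightarrow> (nat \<Rightarrow> 'c) \<Rightarrow> bool" where
  "is_A_basis \<iota> \<theta> E r \<omega> \<longleftrightarrow> (\<forall>i<r. E (\<omega> i) = 0)
     \<and> (\<forall>l. E l = 0 \<longrightarrow> (\<exists>!a. (\<forall>i\<ge>r. a i = 0) \<and>
            l = (\<Sum>i<r. poly (map_poly \<iota> (a i :: 'f poly)) \<theta> * \<omega> i)))"

definition map_fps :: "('a::zero \<Rightarrow> 'b::zero) \<Rightarrow> 'a fps \<Rightarrow> 'b fps" where
  "map_fps h f = Abs_fps (\<lambda>m. h (fps_nth f m))"

end

theory Submission
  imports Defs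
begin

text \<open>The functional equation E(theta z) = rho_t(E z) makes the division points
  xi_(j,m) = E(omega_j / theta^(m+1)) a compatible system, rho_t(xi_(j,m+1)) = xi_(j,m).
  Hence for a = sum c_k t^k the point rho_a(xi_(j,m)) equals sum_(k<=m) c_k xi_(j,m-k),
  the m-th coefficient of a f_j; so the relation defining g_epsilon at level m is the
  m-th coefficient of epsilon(f) = g_epsilon f.  Beyond theta \<noteq> 0, none of the
  remaining structure (Galois, lattice, invertibility of g_epsilon) is needed.\<close>

lemma Cinf_theta_nonzero:
  assumes "Cinf_axioms \<iota> \<theta> v"
  shows "\<theta> \<noteq> 0"
proof
  assume "\<theta> = 0"
  with assms have "v 0 > 1" and "v 0 = 0"
    unfolding Cinf_axioms_def is_abs_val_def by blast+
  then show False by simp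
qed

lemma fps_nth_map_fps [simp]: "fps_nth (map_fps h f) m = h (fps_nth f m)"
  by (simp add: map_fps_def)

lemma funpow_compatible_tower:
  assumes "\<And>n. \<phi> (x (Suc n)) = x n" and "k \<le> m"
  shows "(\<phi> ^^ k) (x m) = x (m - k)"
  using assms(2)
proof (induction k)
  case 0
  then show ?case by simp
next
  case (Suc k)
  then have "m - k = Suc (m - Suc k)" by simp
  with Suc show ?case using assms(1)[of "m - Suc k"] by simp
qed

lemma division_tower_compatible:
  fixes \<theta> :: "'c::field"
  assumes "\<And>z. E (\<theta> * z) = \<phi> (E z)" and "\<theta> \<noteq> 0"
  shows "\<phi> (E (w / \<theta> ^ (Suc n + 1))) = E (w / \<theta> ^ (n + 1))"
proof -
  have "\<theta> * (w / \<theta> ^ (Suc n + 1)) = w / \<theta> ^ (n + 1)"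
    using assms(2) by (simp add: field_simps)
  then show ?thesis using assms(1)[of "w / \<theta> ^ (Suc n + 1)"] by simp
qed

lemma rho_act_compatible_tower:
  assumes "\<And>n. rho_t \<theta> \<kappa> q r (x (Suc n)) = x n"
  shows "rho_act \<iota> \<theta> \<kappa> q r (fps_nth a) m (x m) = fps_nth (map_fps \<iota> a * Abs_fps x) m"
proof -
  have "rho_act \<iota> \<theta> \<kappa> q r (fps_nth a) m (x m) = (\<Sum>k\<le>m. \<iota> (fps_nth a k) * x (m - k))"
    unfolding rho_act_def
    by (rule sum.cong[OF refl])
      (simp add: funpow_compatible_tower[of "rho_t \<theta> \<kappa> q r" x, OF assms])
  also have "\<dots> = fps_nth (map_fps \<iota> a * Abs_fps x) m"
    by (simp add: fps_mult_nth atLeast0AtMost)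
  finally show ?thesis .
qed

theorem lemma3p1:
  fixes \<iota> :: "'f::{finite,field} \<Rightarrow> 'c::field" and \<theta> :: 'c and v :: "'c \<Rightarrow> real"
    and K :: "'c set" and r :: nat and \<kappa> :: "nat \<Rightarrow> 'c" and E :: "'c \<Rightarrow> 'c"
    and \<omega> :: "nat \<Rightarrow> 'c" and \<epsilon> :: "'c \<Rightarrow> 'c" and g :: "nat \<Rightarrow> nat \<Rightarrow> 'f fps"
  defines "q \<equiv> card (UNIV :: 'f set)"
  defines "\<xi> \<equiv> (\<lambda>i m. E (\<omega> i / \<theta> ^ (m + 1)))"
  defines "f \<equiv> (\<lambda>i. Abs_fps (\<xi> i))"
  assumes Cinf: "Cinf_axioms \<iota> \<theta> v"
    and K_field: "is_subfield K" and K_sub: "K \<subseteq> kbar \<iota> \<theta>"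
    and r_pos: "r \<ge> 1" and theta_K: "\<theta> \<in> K"
    and kappa_K: "\<forall>i\<in>{1..r}. \<kappa> i \<in> K" and kappa_r: "\<kappa> r \<noteq> 0"
    and exp: "is_exp v \<theta> \<kappa> q r E"
    and basis: "is_A_basis \<iota> \<theta> E r \<omega>"
    and Gal: "is_Gal (Ksep \<iota> \<theta> K) K \<epsilon>"
    and g_GL: "\<exists>h. \<forall>i<r. \<forall>j<r. (\<Sum>l<r. g i l * h l j) = (if i = j then 1 else 0)
                          \<and> (\<Sum>l<r. h i l * g l j) = (if i = j then 1 else 0)"
    and g_def: "\<forall>i<r. \<forall>m. \<epsilon> (\<xi> i m) =
                   (\<Sum>j<r. rho_act \<iota> \<theta> \<kappa> q r (fps_nth (g i j)) m (\<xi> j m))"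
  shows "\<forall>i<r. map_fps \<epsilon> (f i) = (\<Sum>j<r. map_fps \<iota> (g i j) * f j)"
proof (intro allI impI fps_ext)
  fix i m assume "i < r"
  have functional_eq: "\<And>z. E (\<theta> * z) = rho_t \<theta> \<kappa> q r (E z)"
    using exp unfolding is_exp_def by blast
  have tower: "rho_t \<theta> \<kappa> q r (\<xi> j (Suc n)) = \<xi> j n" for j n
    unfolding \<xi>_def
    by (rule division_tower_compatible[where E = E and \<theta> = \<theta> and \<phi> = "rho_t \<theta> \<kappa> q r",
          OF functional_eq Cinf_theta_nonzero[OF Cinf]])
  have "fps_nth (map_fps \<epsilon> (f i)) m = (\<Sum>j<r. rho_act \<iota> \<theta> \<kappa> q r (fps_nth (g i j)) m (\<xi> j m))"
    using g_def \<open>i < r\<close> by (simp add: f_def)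
  also have "\<dots> = fps_nth (\<Sum>j<r. map_fps \<iota> (g i j) * f j) m"
    by (simp add: rho_act_compatible_tower[where x = "\<xi> _", OF tower] f_def fps_sum_nth)
  finally show "fps_nth (map_fps \<epsilon> (f i)) m = fps_nth (\<Sum>j<r. map_fps \<iota> (g i j) * f j) m" .
qed

end
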